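(* Let $k$ be a field of characteristic $\neq2$, $f\in k[X]$ separable of degree $6$ with set of roots $\Omega\subset\bar k$, $l=k(\Omega)$, $A=k[X]/(f)$, $\delta\in A^*$, and $\delta_\omega=\varphi_\omega(\delta)$ for $\omega\in\Omega$, where $\varphi_\omega$ is evaluation at $X=\omega$. Fix square roots $\sqrt{\delta_\omega}\in\bar k$ and let $m=l(\{\sqrt{\delta_\omega}\sqrt{\delta_\psi}:\omega,\psi\in\Omega\})$. Then $k([\Lambda])=m$.
   Context: $\Lambda$ is the set of $32$ lines $L_\varepsilon\subset\mathbb{P}(A\otimes\bar k)$, for $\varepsilon\in A\otimes\bar k$ with $\varepsilon^2=\delta$, where $L_\varepsilon$ corresponds to the subspace $\{\varepsilon^{-1}(sX+t):s,t\in\bar k\}$. These lines lie on $V_{f,\delta}=\{[q]:\delta q^2\in\mathrm{span}(1,X,X^2)\}$. $G(\bar k/k)$ acts on them. For an object or set $Y$ acted on by $G(\bar k/k)$, the field of definition $k(Y)$ is the smallest subfield $k'\subseteq\bar k$ containing $k$ such that every $\sigma\in G(\bar k/k')$ fixes $Y$. $k([\Lambda])$ denotes the field of definition of the sequence of all lines in $\Lambda$, i.e., the smallest such field over which every line of $\Lambda$ is individually fixed. *)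

theory Defs
  imports "HOL-Computational_Algebra.Computational_Algebra"
begin

(* A subset F of the ambient field (playing the role of \bar k) is a subfield. *)
definition is_subfield :: "'a::field set \<Rightarrow> bool" where
  "is_subfield F \<longleftrightarrow> 0 \<in> F \<and> 1 \<in> F \<and>
     (\<forall>x\<in>F. \<forall>y\<in>F. x + y \<in> F \<and> x - y \<in> F \<and> x * y \<in> F) \<and>
     (\<forall>x\<in>F. inverse x \<in> F)"

definition field_gen :: "'a::field set \<Rightarrow> 'a set" where
  "field_gen S = \<Inter>{F. is_subfield F \<and> S \<subseteq> F}"

definition field_aut :: "('a::field \<Rightarrow> 'a) \<Rightarrow> bool" where
  "field_aut \<sigma> \<longleftrightarrow> bij \<sigma> \<and> \<sigma> 1 = 1 \<and>
     (\<forall>x y. \<sigma> (x + y) = \<sigma> x + \<sigma> y) \<and> (\<forall>x y. \<sigma> (x * y) = \<sigma> x * \<sigma> y)"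

definition poly_over :: "'a::field set \<Rightarrow> 'a poly \<Rightarrow> bool" where
  "poly_over k p \<longleftrightarrow> (\<forall>i. coeff p i \<in> k)"

(* A \<otimes> \bar k = \bar k[X]/(f), elements represented by reduced residues q = q mod f.
   The line L_eps = { eps^{-1} (sX+t) : s,t } as a set of reduced residues. *)
definition line_of :: "'a::field poly \<Rightarrow> 'a poly \<Rightarrow> 'a poly set" where
  "line_of f e = {q. q mod f = q \<and> (\<exists>s t. (e * q) mod f = [:t, s:] mod f)}"

(* \<Lambda>: the lines L_eps for eps in A \<otimes> \bar k with eps^2 = delta (delta represented by d) *)
definition Lambda_lines :: "'a::field poly \<Rightarrow> 'a poly \<Rightarrow> 'a poly set set" where
  "Lambda_lines f d = {line_of f e | e. (e * e) mod f = d mod f}"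

definition fixes_each :: "'a::field set \<Rightarrow> 'a poly set set \<Rightarrow> bool" where
  "fixes_each F Ys \<longleftrightarrow> (\<forall>\<sigma>. field_aut \<sigma> \<and> (\<forall>x\<in>F. \<sigma> x = x) \<longrightarrow>
      (\<forall>Y\<in>Ys. map_poly \<sigma> ` Y = Y))"

definition is_field_of_def_seq :: "'a::field set \<Rightarrow> 'a poly set set \<Rightarrow> 'a set \<Rightarrow> bool" where
  "is_field_of_def_seq k Ys m \<longleftrightarrow> is_subfield m \<and> k \<subseteq> m \<and> fixes_each m Ys \<and>
     (\<forall>k'. is_subfield k' \<and> k \<subseteq> k' \<and> fixes_each k' Ys \<longrightarrow> m \<subseteq> k')"

end

theory Submission
  imports Defs
begin

text \<open>Evaluation at the roots identifies A over the algebraic closure with functions on the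
  root set \<open>\<Omega>\<close> of f. A square root e of d then takes the values \<open>\<plusminus> r \<omega>\<close>, and since a
  quadratic vanishing on three roots is zero, two lines \<open>L e\<close> and \<open>L e'\<close> coincide exactly when e'
  is a constant multiple of e on \<open>\<Omega>\<close>. An automorphism \<sigma> over k maps \<open>L e\<close> to \<open>L (\<sigma> e)\<close>, so it
  fixes \<open>L e\<close> iff \<open>\<sigma> (e \<omega>) = c * e (\<sigma> \<omega>)\<close> for one constant c. If \<sigma> fixes \<open>\<Omega>\<close> and all products
  \<open>r \<omega> * r \<psi>\<close>, this holds for every e. Conversely, comparing r with the square root whose sign
  is flipped at \<open>\<sigma> \<omega>\<close> shows that \<sigma> fixes \<open>\<Omega>\<close>, and then \<open>c\<^sup>2 = 1\<close> shows that it fixes the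
  products. Finally, by Zorn's lemma embeddings of subfields over k extend to automorphisms of the
  closure, so a simple root of a polynomial over \<open>k' \<supseteq> k\<close> that is fixed by all automorphisms over
  k' lies in k'; the roots of f and, as \<open>2 \<noteq> 0\<close>, the products are such simple roots.\<close>

section \<open>Subfields and polynomials over them\<close>

lemma subfield_0: "is_subfield F \<Longrightarrow> 0 \<in> F"
  and subfield_1: "is_subfield F \<Longrightarrow> 1 \<in> F"
  and subfield_add: "is_subfield F \<Longrightarrow> x \<in> F \<Longrightarrow> y \<in> F \<Longrightarrow> x + y \<in> F"
  and subfield_diff: "is_subfield F \<Longrightarrow> x \<in> F \<Longrightarrow> y \<in> F \<Longrightarrow> x - y \<in> F"
  and subfield_mult: "is_subfield F \<Longrightarrow> x \<in> F \<Longrightarrow> y \<in> F \<Longrightarrow> x * y \<in> F"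
  and subfield_inverse: "is_subfield F \<Longrightarrow> x \<in> F \<Longrightarrow> inverse x \<in> F"
  by (simp_all add: is_subfield_def)

lemma subfield_uminus: "is_subfield F \<Longrightarrow> x \<in> F \<Longrightarrow> - x \<in> F"
  using subfield_diff[of F 0 x] subfield_0[of F] by simp

lemma subfield_divide: "is_subfield F \<Longrightarrow> x \<in> F \<Longrightarrow> y \<in> F \<Longrightarrow> x / y \<in> F"
  by (simp add: divide_inverse subfield_mult subfield_inverse)

lemma subfield_sum: "is_subfield F \<Longrightarrow> (\<And>i. i \<in> I \<Longrightarrow> g i \<in> F) \<Longrightarrow> sum g I \<in> F"
  by (induction I rule: infinite_finite_induct) (auto intro: subfield_0 subfield_add)

lemma subfield_Inter: "(\<And>F. F \<in> S \<Longrightarrow> is_subfield F) \<Longrightarrow> is_subfield (\<Inter>S)"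
  by (auto simp: is_subfield_def)

lemma subfield_field_gen: "is_subfield (field_gen S)"
  unfolding field_gen_def by (rule subfield_Inter) auto

lemma field_gen_superset: "S \<subseteq> field_gen S"
  unfolding field_gen_def by auto

lemma field_gen_least: "is_subfield F \<Longrightarrow> S \<subseteq> F \<Longrightarrow> field_gen S \<subseteq> F"
  unfolding field_gen_def by auto

lemma poly_over_UNIV [simp]: "poly_over UNIV p"
  by (simp add: poly_over_def)

lemma poly_over_0 [simp]: "is_subfield F \<Longrightarrow> poly_over F 0"
  by (simp add: poly_over_def subfield_0)

lemma poly_over_const: "is_subfield F \<Longrightarrow> c \<in> F \<Longrightarrow> poly_over F [:c:]"
  by (simp add: poly_over_def coeff_pCons subfield_0 split: nat.splits)

lemma poly_over_pCons_iff: "poly_over F (pCons c p) \<longleftrightarrow> c \<in> F \<and> poly_over F p"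
  unfolding poly_over_def by (metis coeff_pCons_0 coeff_pCons_Suc not0_implies_Suc)

lemma poly_over_X: "is_subfield F \<Longrightarrow> poly_over F [:0, 1:]"
  by (simp add: poly_over_pCons_iff poly_over_const subfield_0 subfield_1)

lemma poly_over_add: "is_subfield F \<Longrightarrow> poly_over F p \<Longrightarrow> poly_over F q \<Longrightarrow> poly_over F (p + q)"
  by (simp add: poly_over_def subfield_add)

lemma poly_over_diff: "is_subfield F \<Longrightarrow> poly_over F p \<Longrightarrow> poly_over F q \<Longrightarrow> poly_over F (p - q)"
  by (simp add: poly_over_def subfield_diff)

lemma poly_over_smult: "is_subfield F \<Longrightarrow> c \<in> F \<Longrightarrow> poly_over F p \<Longrightarrow> poly_over F (smult c p)"
  by (simp add: poly_over_def subfield_mult)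

lemma poly_over_monom: "is_subfield F \<Longrightarrow> c \<in> F \<Longrightarrow> poly_over F (monom c n)"
  by (simp add: poly_over_def coeff_monom subfield_0)

lemma poly_over_mult: "is_subfield F \<Longrightarrow> poly_over F p \<Longrightarrow> poly_over F q \<Longrightarrow> poly_over F (p * q)"
  unfolding poly_over_def coeff_mult by (auto intro!: subfield_sum subfield_mult)

lemma poly_over_mono: "F \<subseteq> G \<Longrightarrow> poly_over F p \<Longrightarrow> poly_over G p"
  by (auto simp: poly_over_def)

lemma poly_over_lead_coeff: "poly_over F p \<Longrightarrow> lead_coeff p \<in> F"
  by (simp add: poly_over_def)

lemma poly_in_ring:
  assumes "F \<subseteq> S" "0 \<in> S" "\<And>x y. x \<in> S \<Longrightarrow> y \<in> S \<Longrightarrow> x + y \<in> S"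
     "\<And>x y. x \<in> S \<Longrightarrow> y \<in> S \<Longrightarrow> x * y \<in> S" "poly_over F p" "x \<in> S"
  shows "poly p x \<in> S"
  using assms(5) by (induction p) (use assms in \<open>auto simp: poly_over_pCons_iff\<close>)

lemma poly_in_subfield: "is_subfield F \<Longrightarrow> poly_over F p \<Longrightarrow> x \<in> F \<Longrightarrow> poly p x \<in> F"
  by (rule poly_in_ring) (auto intro: subfield_0 subfield_add subfield_mult)

lemma poly_over_div_mod:
  assumes F: "is_subfield F" and g: "poly_over F g" "g \<noteq> 0" and p: "poly_over F p"
  shows "\<exists>q r. poly_over F q \<and> poly_over F r \<and> p = g * q + r \<and> (r = 0 \<or> degree r < degree g)"
  using p
proof (induction "degree p" arbitrary: p rule: less_induct)
  case less
  show ?case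
  proof (cases "p = 0 \<or> degree p < degree g")
    case True
    then show ?thesis using less.prems F by (intro exI[of _ 0] exI[of _ p]) (auto simp: poly_over_def subfield_0)
  next
    case False
    hence p0: "p \<noteq> 0" and dg: "degree g \<le> degree p" by auto
    define c where "c = lead_coeff p / lead_coeff g"
    define m where "m = monom c (degree p - degree g)"
    define p' where "p' = p - g * m"
    have "c \<noteq> 0" unfolding c_def using p0 g by simp
    have mF: "poly_over F m"
      unfolding m_def c_def using F less.prems g by (simp add: poly_over_lead_coeff subfield_divide poly_over_monom)
    have p'F: "poly_over F p'" unfolding p'_def using F less.prems g mF by (simp add: poly_over_diff poly_over_mult)
    have deg_gm: "degree (g * m) = degree p" unfolding m_def using g \<open>c \<noteq> 0\<close> dg
      by (subst degree_mult_eq) (auto simp: degree_monom_eq)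
    have "lead_coeff (g * m) = lead_coeff p" unfolding m_def using g \<open>c \<noteq> 0\<close> dg
      by (simp add: lead_coeff_mult lead_coeff_monom degree_monom_eq c_def)
    hence "coeff p' (degree p) = 0" unfolding p'_def using deg_gm by simp
    moreover have "degree p' \<le> degree p" unfolding p'_def using deg_gm by (metis degree_diff_le order_refl)
    ultimately have "p' = 0 \<or> degree p' < degree p" by (metis leading_coeff_0_iff le_neq_implies_less)
    then show ?thesis
    proof
      assume "p' = 0"
      then show ?thesis using mF F by (intro exI[of _ m] exI[of _ 0]) (auto simp: p'_def poly_over_def subfield_0)
    next
      assume "degree p' < degree p"
      from less.hyps[OF this p'F] obtain q r where qr: "poly_over F q" "poly_over F r"
        "p' = g * q + r" "r = 0 \<or> degree r < degree g" by blast
      show ?thesis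
        using qr mF F by (intro exI[of _ "q + m"] exI[of _ r])
          (auto simp: poly_over_add algebra_simps p'_def eq_diff_eq)
    qed
  qed
qed

lemma minimal_poly_exists:
  assumes F: "is_subfield F" and g: "g \<noteq> 0" "poly_over F g" "poly g a = 0"
  obtains p where "poly_over F p" "lead_coeff p = 1" "poly p a = 0"
    "\<And>q. poly_over F q \<Longrightarrow> poly q a = 0 \<Longrightarrow> \<exists>s. poly_over F s \<and> q = p * s"
proof -
  define P where "P n \<longleftrightarrow> (\<exists>p. p \<noteq> 0 \<and> poly_over F p \<and> poly p a = 0 \<and> degree p = n)" for n
  have "P (degree g)" using g unfolding P_def by blast
  hence "P (LEAST n. P n)" by (rule LeastI)
  then obtain p0 where p0: "p0 \<noteq> 0" "poly_over F p0" "poly p0 a = 0" "degree p0 = (LEAST n. P n)"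
    unfolding P_def by blast
  define p where "p = smult (inverse (lead_coeff p0)) p0"
  have lc0: "lead_coeff p0 \<noteq> 0" using p0(1) by simp
  have pF: "poly_over F p"
    unfolding p_def using F p0 by (intro poly_over_smult subfield_inverse poly_over_lead_coeff) auto
  have lp: "lead_coeff p = 1" and pa: "poly p a = 0" unfolding p_def using lc0 p0 by simp_all
  have dp: "degree p = (LEAST n. P n)" unfolding p_def using lc0 p0(4) by simp
  have "\<exists>s. poly_over F s \<and> q = p * s" if q: "poly_over F q" "poly q a = 0" for q
  proof -
    from poly_over_div_mod[OF F pF] lp q obtain s r where sr: "poly_over F s" "poly_over F r"
      "q = p * s + r" "r = 0 \<or> degree r < degree p" by fastforce
    have "r = 0"
    proof (rule ccontr)
      assume "r \<noteq> 0"
      moreover have "poly r a = 0" using q sr pa by (simp add: eq_diff_eq[symmetric])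
      ultimately have "P (degree r)" using sr unfolding P_def by blast
      hence "(LEAST n. P n) \<le> degree r" by (rule Least_le)
      with sr \<open>r \<noteq> 0\<close> dp show False by simp
    qed
    thus ?thesis using sr by auto
  qed
  with pF lp pa show ?thesis by (rule that)
qed

lemma monic_root_imp_degree_pos: "lead_coeff p = (1::'a::field) \<Longrightarrow> poly p a = 0 \<Longrightarrow> degree p > 0"
  by (metis degree_eq_zeroE gr0I lead_coeff_pCons(2) one_neq_zero pCons_0_0 poly_const_conv)

lemma root_of_monic_linear_in_subfield:
  assumes F: "is_subfield F" and p: "poly_over F p" "lead_coeff p = 1" "degree p = 1" "poly p a = 0"
  shows "a \<in> F"
proof -
  obtain c q where "p = pCons c q" by (cases p) auto
  with p(2,3) have "p = [:c, 1:]" by (cases "q = 0") (auto elim: degree_eq_zeroE)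
  with p(1,4) F show ?thesis
    by (simp add: poly_over_pCons_iff eq_neg_iff_add_eq_0[symmetric] add.commute subfield_uminus)
qed


section \<open>Homomorphisms defined on subfields\<close>

definition field_hom_on :: "'a::field set \<Rightarrow> ('a \<Rightarrow> 'a) \<Rightarrow> bool" where
  "field_hom_on R \<phi> \<longleftrightarrow> is_subfield R \<and> \<phi> 1 = 1 \<and>
     (\<forall>x\<in>R. \<forall>y\<in>R. \<phi> (x + y) = \<phi> x + \<phi> y \<and> \<phi> (x * y) = \<phi> x * \<phi> y)"

lemma field_hom_on_subfield: "field_hom_on R \<phi> \<Longrightarrow> is_subfield R"
  and field_hom_on_1: "field_hom_on R \<phi> \<Longrightarrow> \<phi> 1 = 1"
  and field_hom_on_add: "field_hom_on R \<phi> \<Longrightarrow> x \<in> R \<Longrightarrow> y \<in> R \<Longrightarrow> \<phi> (x + y) = \<phi> x + \<phi> y"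
  and field_hom_on_mult: "field_hom_on R \<phi> \<Longrightarrow> x \<in> R \<Longrightarrow> y \<in> R \<Longrightarrow> \<phi> (x * y) = \<phi> x * \<phi> y"
  by (simp_all add: field_hom_on_def)

context
  fixes R \<phi> assumes hom: "field_hom_on R \<phi>"
begin

lemma field_hom_on_0: "\<phi> 0 = 0"
proof -
  have "\<phi> 0 + \<phi> 0 = \<phi> 0 + 0"
    using field_hom_on_add[OF hom subfield_0 subfield_0] field_hom_on_subfield[OF hom] by simp
  thus ?thesis by (rule add_left_imp_eq)
qed

lemma field_hom_on_diff: "x \<in> R \<Longrightarrow> y \<in> R \<Longrightarrow> \<phi> (x - y) = \<phi> x - \<phi> y"
  using field_hom_on_add[OF hom, of "x - y" y] field_hom_on_subfield[OF hom]
  by (simp add: subfield_diff eq_diff_eq)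

lemma field_hom_on_sum: "(\<And>i. i \<in> I \<Longrightarrow> g i \<in> R) \<Longrightarrow> \<phi> (sum g I) = (\<Sum>i\<in>I. \<phi> (g i))"
proof (induction I rule: infinite_finite_induct)
  case (insert x I)
  have "sum g I \<in> R" using insert.prems by (intro subfield_sum[OF field_hom_on_subfield[OF hom]]) auto
  with insert show ?case using field_hom_on_add[OF hom, of "g x" "sum g I"] by simp
qed (simp_all add: field_hom_on_0)

lemma field_hom_on_nonzero: "x \<in> R \<Longrightarrow> x \<noteq> 0 \<Longrightarrow> \<phi> x \<noteq> 0"
  using field_hom_on_mult[OF hom, of x "inverse x"] field_hom_on_1[OF hom]
    subfield_inverse[OF field_hom_on_subfield[OF hom]] by auto

lemma field_hom_on_inj: "inj_on \<phi> R"
proof (rule inj_onI, rule ccontr)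
  fix x y assume "x \<in> R" "y \<in> R" "\<phi> x = \<phi> y" "x \<noteq> y"
  thus False using field_hom_on_nonzero[of "x - y"] field_hom_on_diff
    subfield_diff[OF field_hom_on_subfield[OF hom]] by auto
qed

lemma coeff_map_poly_hom: "coeff (map_poly \<phi> p) n = \<phi> (coeff p n)"
  by (simp add: coeff_map_poly field_hom_on_0)

lemma map_poly_hom_add: "poly_over R p \<Longrightarrow> poly_over R q \<Longrightarrow>
    map_poly \<phi> (p + q) = map_poly \<phi> p + map_poly \<phi> q"
  by (intro poly_eqI) (simp add: coeff_map_poly_hom field_hom_on_add[OF hom] poly_over_def)

lemma map_poly_hom_diff: "poly_over R p \<Longrightarrow> poly_over R q \<Longrightarrow>
    map_poly \<phi> (p - q) = map_poly \<phi> p - map_poly \<phi> q"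
  by (intro poly_eqI) (simp add: coeff_map_poly_hom field_hom_on_diff poly_over_def)

lemma map_poly_hom_mult:
  assumes "poly_over R p" "poly_over R q"
  shows "map_poly \<phi> (p * q) = map_poly \<phi> p * map_poly \<phi> q"
proof (rule poly_eqI)
  fix n
  have "coeff (map_poly \<phi> (p * q)) n = (\<Sum>i\<le>n. \<phi> (coeff p i * coeff q (n - i)))"
    using assms by (simp add: coeff_map_poly_hom coeff_mult field_hom_on_sum poly_over_def
      subfield_mult[OF field_hom_on_subfield[OF hom]])
  also have "\<dots> = coeff (map_poly \<phi> p * map_poly \<phi> q) n"
    using assms by (simp add: coeff_mult coeff_map_poly_hom field_hom_on_mult[OF hom] poly_over_def)
  finally show "coeff (map_poly \<phi> (p * q)) n = coeff (map_poly \<phi> p * map_poly \<phi> q) n" .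
qed

lemma poly_map_poly_hom: "poly_over R p \<Longrightarrow> x \<in> R \<Longrightarrow> \<phi> (poly p x) = poly (map_poly \<phi> p) (\<phi> x)"
proof (induction p)
  case (pCons a p)
  have R: "is_subfield R" by (rule field_hom_on_subfield[OF hom])
  with pCons show ?case
    by (simp add: map_poly_pCons field_hom_on_0 field_hom_on_add[OF hom] field_hom_on_mult[OF hom]
      poly_over_pCons_iff poly_in_subfield subfield_mult)
qed (simp add: field_hom_on_0)

lemma degree_map_poly_hom: "poly_over R p \<Longrightarrow> degree (map_poly \<phi> p) = degree p"
proof (cases "p = 0")
  case False
  assume "poly_over R p"
  hence "coeff (map_poly \<phi> p) (degree p) \<noteq> 0"
    using False field_hom_on_nonzero by (simp add: coeff_map_poly_hom poly_over_def)
  thus ?thesis using map_poly_degree_leq[of \<phi> p] le_degree by (metis antisym)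
qed simp

end

lemma map_poly_fixing_coeffs:
  "is_subfield F \<Longrightarrow> (\<forall>x\<in>F. \<phi> x = x) \<Longrightarrow> poly_over F p \<Longrightarrow> map_poly \<phi> p = p"
  by (intro poly_eqI) (simp add: coeff_map_poly poly_over_def subfield_0)

lemma field_hom_permutes_roots:
  assumes hom: "field_hom_on UNIV \<phi>" and g: "g \<noteq> 0" "map_poly \<phi> g = g"
  shows "\<phi> ` {x. poly g x = 0} = {x. poly g x = 0}"
proof -
  have "\<phi> ` {x. poly g x = 0} \<subseteq> {x. poly g x = 0}"
  proof (intro image_subsetI CollectI)
    fix x assume "x \<in> {x. poly g x = 0}"
    thus "poly g (\<phi> x) = 0"
      using poly_map_poly_hom[OF hom, of g x] g(2) field_hom_on_0[OF hom] by simp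
  qed
  moreover have "card (\<phi> ` {x. poly g x = 0}) = card {x. poly g x = 0}"
    using field_hom_on_inj[OF hom] by (simp add: card_image inj_on_subset)
  ultimately show ?thesis using poly_roots_finite[OF g(1)] by (simp add: card_subset_eq)
qed

section \<open>Automorphisms\<close>

lemma field_aut_1: "field_aut \<sigma> \<Longrightarrow> \<sigma> 1 = 1"
  and field_aut_add: "field_aut \<sigma> \<Longrightarrow> \<sigma> (x + y) = \<sigma> x + \<sigma> y"
  and field_aut_mult: "field_aut \<sigma> \<Longrightarrow> \<sigma> (x * y) = \<sigma> x * \<sigma> y"
  and field_aut_bij: "field_aut \<sigma> \<Longrightarrow> bij \<sigma>"
  by (simp_all add: field_aut_def)

lemma field_aut_hom: "field_aut \<sigma> \<Longrightarrow> field_hom_on UNIV \<sigma>"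
  by (simp add: field_aut_def field_hom_on_def is_subfield_def)

lemma field_aut_0: "field_aut \<sigma> \<Longrightarrow> \<sigma> 0 = 0"
  by (rule field_hom_on_0[OF field_aut_hom])

lemma field_aut_uminus: "field_aut \<sigma> \<Longrightarrow> \<sigma> (- x) = - \<sigma> x"
  using field_hom_on_diff[OF field_aut_hom, of \<sigma> 0 x] by (simp add: field_aut_0)

lemma field_aut_eq_0_iff: "field_aut \<sigma> \<Longrightarrow> \<sigma> x = 0 \<longleftrightarrow> x = 0"
  using field_hom_on_nonzero[OF field_aut_hom] field_aut_0 by blast

lemma field_aut_power: "field_aut \<sigma> \<Longrightarrow> \<sigma> (x ^ n) = \<sigma> x ^ n"
  by (induction n) (simp_all add: field_aut_1 field_aut_mult)

lemma field_aut_poly: "field_aut \<sigma> \<Longrightarrow> \<sigma> (poly p x) = poly (map_poly \<sigma> p) (\<sigma> x)"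
  using poly_map_poly_hom[OF field_aut_hom] by simp

lemma field_aut_map_poly_mult: "field_aut \<sigma> \<Longrightarrow> map_poly \<sigma> (p * q) = map_poly \<sigma> p * map_poly \<sigma> q"
  using map_poly_hom_mult[OF field_aut_hom] by simp

lemma field_aut_map_poly_diff: "field_aut \<sigma> \<Longrightarrow> map_poly \<sigma> (p - q) = map_poly \<sigma> p - map_poly \<sigma> q"
  using map_poly_hom_diff[OF field_aut_hom] by simp

lemma field_aut_inv:
  assumes "field_aut \<sigma>" shows "field_aut (inv \<sigma>)"
proof -
  have b: "bij \<sigma>" by (rule field_aut_bij[OF assms])
  have inv_eq: "inv \<sigma> z = x \<longleftrightarrow> z = \<sigma> x" for x z using bij_inv_eq_iff[OF b] by metis
  show ?thesis unfolding field_aut_def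
    using b assms by (simp add: bij_imp_bij_inv inv_eq field_aut_1 field_aut_add field_aut_mult
      surj_f_inv_f[OF bij_is_surj[OF b]])
qed

lemma map_poly_field_aut_inv:
  assumes "field_aut \<sigma>"
  shows "map_poly \<sigma> (map_poly (inv \<sigma>) p) = p" "map_poly (inv \<sigma>) (map_poly \<sigma> p) = p"
  using assms field_aut_inv[OF assms] field_aut_bij[OF assms]
  by (simp_all add: map_poly_map_poly field_aut_0 comp_def bij_is_inj bij_is_surj surj_f_inv_f)

section \<open>Extending homomorphisms into an algebraic closure\<close>

definition adjoin :: "'a::field set \<Rightarrow> 'a \<Rightarrow> 'a set" where
  "adjoin R a = {poly h a | h. poly_over R h}"

definition hom_graph :: "'a set \<Rightarrow> ('a \<Rightarrow> 'a) \<Rightarrow> ('a \<times> 'a) set" where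
  "hom_graph R \<phi> = (\<lambda>x. (x, \<phi> x)) ` R"

definition hom_extensions :: "'a::field set \<Rightarrow> ('a \<Rightarrow> 'a) \<Rightarrow> ('a \<times> 'a) set set" where
  "hom_extensions R0 \<phi>0 =
     {hom_graph R \<phi> | R \<phi>. field_hom_on R \<phi> \<and> R0 \<subseteq> R \<and> (\<forall>x\<in>R0. \<phi> x = \<phi>0 x)}"

lemma hom_graph_mem [simp]: "(x, y) \<in> hom_graph R \<phi> \<longleftrightarrow> x \<in> R \<and> y = \<phi> x"
  by (auto simp: hom_graph_def)

lemma Domain_hom_graph [simp]: "Domain (hom_graph R \<phi>) = R"
  by (auto simp: hom_graph_def)

lemma hom_graph_subset_iff: "hom_graph R \<phi> \<subseteq> hom_graph R' \<phi>' \<longleftrightarrow> R \<subseteq> R' \<and> (\<forall>x\<in>R. \<phi>' x = \<phi> x)"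
  by (auto simp: hom_graph_def)

lemma Union_chain_hom_extensions:
  assumes C: "C \<in> chains (hom_extensions R0 \<phi>0)" "C \<noteq> {}"
  shows "\<Union>C \<in> hom_extensions R0 \<phi>0"
proof -
  define U where "U = \<Union>C"
  have member: "\<exists>R \<phi>. G = hom_graph R \<phi> \<and> field_hom_on R \<phi> \<and> R0 \<subseteq> R \<and> (\<forall>x\<in>R0. \<phi> x = \<phi>0 x)"
    if "G \<in> C" for G using chainsD2[OF C(1)] that unfolding hom_extensions_def by blast
  have common: "\<exists>G\<in>C. p \<in> G \<and> q \<in> G" if pq: "p \<in> U" "q \<in> U" for p q
  proof -
    obtain G1 G2 where "G1 \<in> C" "G2 \<in> C" "p \<in> G1" "q \<in> G2" using pq unfolding U_def by blast
    with chainsD[OF C(1) this(1,2)] show ?thesis by blast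
  qed
  have single_valued: "y = z" if xyz: "(x, y) \<in> U" "(x, z) \<in> U" for x y z
  proof -
    obtain G where "G \<in> C" "(x, y) \<in> G" "(x, z) \<in> G" using common[OF xyz] by blast
    with member show ?thesis by force
  qed
  define R where "R = Domain U"
  define \<phi> where "\<phi> x = (THE y. (x, y) \<in> U)" for x
  have \<phi>_eq: "\<phi> x = y" if "(x, y) \<in> U" for x y
    unfolding \<phi>_def using that single_valued by blast
  have U_eq: "U = hom_graph R \<phi>"
  proof (intro set_eqI iffI)
    fix p assume "p \<in> U"
    then show "p \<in> hom_graph R \<phi>" using \<phi>_eq unfolding R_def by (cases p) auto
  next
    fix p assume "p \<in> hom_graph R \<phi>"
    then obtain x where "p = (x, \<phi> x)" "x \<in> R" by (auto simp: hom_graph_def)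
    then show "p \<in> U" using \<phi>_eq unfolding R_def by auto
  qed
  have member_below: "R' \<subseteq> R \<and> (\<forall>z\<in>R'. \<phi> z = \<phi>' z)" if "hom_graph R' \<phi>' \<in> C" for R' \<phi>'
    using that U_eq hom_graph_subset_iff[of R' \<phi>' R \<phi>] unfolding U_def by blast
  have below: "\<exists>RG \<phi>G. field_hom_on RG \<phi>G \<and> RG \<subseteq> R \<and> x \<in> RG \<and> y \<in> RG \<and> (\<forall>z\<in>RG. \<phi> z = \<phi>G z)"
    if "x \<in> R" "y \<in> R" for x y
  proof -
    have "(x, \<phi> x) \<in> U" "(y, \<phi> y) \<in> U" using that U_eq by auto
    then obtain G where "G \<in> C" "(x, \<phi> x) \<in> G" "(y, \<phi> y) \<in> G" using common by blast
    with member obtain RG \<phi>G where "G = hom_graph RG \<phi>G" "field_hom_on RG \<phi>G" by blast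
    with \<open>G \<in> C\<close> \<open>(x, \<phi> x) \<in> G\<close> \<open>(y, \<phi> y) \<in> G\<close> member_below[of RG \<phi>G]
    show ?thesis by auto
  qed
  obtain G where "G \<in> C" using C(2) by blast
  then obtain R1 \<phi>1 where R1: "G = hom_graph R1 \<phi>1" "field_hom_on R1 \<phi>1" "R0 \<subseteq> R1"
    "\<forall>x\<in>R0. \<phi>1 x = \<phi>0 x" using member by blast
  with \<open>G \<in> C\<close> have R1_sub: "R1 \<subseteq> R" and agree: "\<forall>x\<in>R1. \<phi> x = \<phi>1 x"
    using member_below by blast+
  have "is_subfield R" unfolding is_subfield_def
  proof (intro conjI ballI)
    show "0 \<in> R" "1 \<in> R"
      using R1_sub subfield_0 subfield_1 field_hom_on_subfield[OF R1(2)] by auto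
    fix x y assume "x \<in> R" "y \<in> R"
    from below[OF this] obtain RG \<phi>G where "field_hom_on RG \<phi>G" "RG \<subseteq> R" "x \<in> RG" "y \<in> RG"
      by blast
    with field_hom_on_subfield show "x + y \<in> R" "x - y \<in> R" "x * y \<in> R" "inverse x \<in> R"
      by (blast intro: subfield_add subfield_diff subfield_mult subfield_inverse)+
  qed
  moreover have "\<phi> 1 = 1"
    using agree field_hom_on_1[OF R1(2)] subfield_1[OF field_hom_on_subfield[OF R1(2)]] by simp
  moreover have "\<phi> (x + y) = \<phi> x + \<phi> y \<and> \<phi> (x * y) = \<phi> x * \<phi> y" if "x \<in> R" "y \<in> R" for x y
  proof -
    from below[OF that] obtain RG \<phi>G where
      RG: "field_hom_on RG \<phi>G" "x \<in> RG" "y \<in> RG" "\<forall>z\<in>RG. \<phi> z = \<phi>G z" by blast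
    moreover have "x + y \<in> RG" "x * y \<in> RG"
      using RG field_hom_on_subfield subfield_add subfield_mult by blast+
    ultimately show ?thesis using field_hom_on_add[OF RG(1)] field_hom_on_mult[OF RG(1)] by simp
  qed
  ultimately have "field_hom_on R \<phi>" by (simp add: field_hom_on_def)
  moreover have "R0 \<subseteq> R" "\<forall>x\<in>R0. \<phi> x = \<phi>0 x" using R1 R1_sub agree by auto
  ultimately show ?thesis unfolding hom_extensions_def U_def[symmetric] U_eq by blast
qed

locale alg_closure =
  fixes K :: "'a::field set"
  assumes K_subfield: "is_subfield K"
    and closed: "\<forall>p::'a poly. degree p > 0 \<longrightarrow> (\<exists>x. poly p x = 0)"
    and algebraic: "\<forall>x::'a. \<exists>p. p \<noteq> 0 \<and> poly_over K p \<and> poly p x = 0"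
begin

text \<open>An inverse of a nonzero x is read off the constant term of its minimal polynomial.\<close>
lemma subring_is_subfield:
  assumes KS: "K \<subseteq> S" and add: "\<And>x y. x \<in> S \<Longrightarrow> y \<in> S \<Longrightarrow> x + y \<in> S"
    and mult: "\<And>x y. x \<in> S \<Longrightarrow> y \<in> S \<Longrightarrow> x * y \<in> S"
  shows "is_subfield S"
proof -
  have S0: "0 \<in> S" and S1: "1 \<in> S" and Sm1: "-1 \<in> S"
    using KS subfield_0[OF K_subfield] subfield_1[OF K_subfield]
      subfield_uminus[OF K_subfield subfield_1[OF K_subfield]] by auto
  have "inverse x \<in> S" if x: "x \<in> S" "x \<noteq> 0" for x
  proof -
    obtain g where "g \<noteq> 0" "poly_over K g" "poly g x = 0" using algebraic by blast
    then obtain p where p: "poly_over K p" "lead_coeff p = 1" "poly p x = 0"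
      "\<And>q. poly_over K q \<Longrightarrow> poly q x = 0 \<Longrightarrow> \<exists>s. poly_over K s \<and> q = p * s"
      by (rule minimal_poly_exists[OF K_subfield]) blast
    obtain c p1 where pc: "p = pCons c p1" by (cases p) auto
    have c: "c \<in> K" and p1: "poly_over K p1" using p(1) pc by (auto simp: poly_over_pCons_iff)
    have "c \<noteq> 0"
    proof
      assume "c = 0"
      hence p1_nz: "p1 \<noteq> 0" and "poly p1 x = 0" using p(2,3) pc x by auto
      with p(4)[OF p1] obtain s where "p1 = p * s" by blast
      with p1_nz have "degree p \<le> degree p1" by (simp add: degree_mult_eq)
      with pc p1_nz show False by simp
    qed
    have "c + x * poly p1 x = 0" using p(3) pc by simp
    hence "x * (- poly p1 x / c) = 1" using \<open>c \<noteq> 0\<close> by (simp add: field_simps add_eq_0_iff)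
    hence "inverse x = poly (smult (- 1 / c) p1) x" by (simp add: inverse_unique)
    moreover have "poly_over K (smult (- 1 / c) p1)"
      using K_subfield c p1 by (intro poly_over_smult subfield_divide subfield_uminus subfield_1)
    ultimately show ?thesis using poly_in_ring[OF KS S0 add mult _ x(1)] by metis
  qed
  hence "inverse x \<in> S" if "x \<in> S" for x using that S0 by (cases "x = 0") auto
  moreover have "x - y \<in> S" if "x \<in> S" "y \<in> S" for x y
    using add[OF that(1) mult[OF Sm1 that(2)]] by simp
  ultimately show ?thesis unfolding is_subfield_def using S0 S1 add mult by simp
qed

lemma adjoin_subfield:
  assumes R: "is_subfield R" "K \<subseteq> R"
  shows "is_subfield (adjoin R a)" and "R \<subseteq> adjoin R a" and "a \<in> adjoin R a"
proof -
  show sub: "R \<subseteq> adjoin R a"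
    unfolding adjoin_def using poly_over_const[OF R(1)] by force
  show "a \<in> adjoin R a"
    unfolding adjoin_def using poly_over_X[OF R(1)] by force
  show "is_subfield (adjoin R a)"
  proof (rule subring_is_subfield)
    show "K \<subseteq> adjoin R a" using sub R(2) by blast
    fix x y assume "x \<in> adjoin R a" "y \<in> adjoin R a"
    then obtain h1 h2 where h: "poly_over R h1" "poly_over R h2" "x = poly h1 a" "y = poly h2 a"
      unfolding adjoin_def by blast
    have "x + y = poly (h1 + h2) a" "x * y = poly (h1 * h2) a" using h(3,4) by simp_all
    thus "x + y \<in> adjoin R a" "x * y \<in> adjoin R a"
      unfolding adjoin_def using poly_over_add[OF R(1) h(1,2)] poly_over_mult[OF R(1) h(1,2)] by blast+
  qed
qed


lemma hom_extends_to_root: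
  assumes hom: "field_hom_on R \<phi>" and KR: "K \<subseteq> R"
    and p: "poly_over R p" "poly p a = 0"
       "\<And>q. poly_over R q \<Longrightarrow> poly q a = 0 \<Longrightarrow> \<exists>s. poly_over R s \<and> q = p * s"
    and b: "poly (map_poly \<phi> p) b = 0"
  obtains \<phi>' where "field_hom_on (adjoin R a) \<phi>'" "\<forall>x\<in>R. \<phi>' x = \<phi> x" "\<phi>' a = b"
proof -
  have R: "is_subfield R" by (rule field_hom_on_subfield[OF hom])
  have well_defined: "poly (map_poly \<phi> h1) b = poly (map_poly \<phi> h2) b"
    if h: "poly_over R h1" "poly_over R h2" "poly h1 a = poly h2 a" for h1 h2
  proof -
    from p(3)[OF poly_over_diff[OF R h(1,2)]] h(3) obtain s where s: "poly_over R s" "h1 - h2 = p * s"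
      by auto
    have "map_poly \<phi> h1 - map_poly \<phi> h2 = map_poly \<phi> p * map_poly \<phi> s"
      using map_poly_hom_diff[OF hom h(1,2)] map_poly_hom_mult[OF hom p(1) s(1)] s(2) by simp
    hence "poly (map_poly \<phi> h1) b - poly (map_poly \<phi> h2) b = 0"
      using b by (metis poly_diff poly_mult mult_zero_left)
    thus ?thesis by simp
  qed
  define \<phi>' where "\<phi>' x = poly (map_poly \<phi> (SOME h. poly_over R h \<and> poly h a = x)) b" for x
  have \<phi>'_poly: "\<phi>' (poly h a) = poly (map_poly \<phi> h) b" if h: "poly_over R h" for h
  proof -
    have "\<exists>h'. poly_over R h' \<and> poly h' a = poly h a" using h by blast
    from someI_ex[OF this] well_defined h show ?thesis unfolding \<phi>'_def by blast
  qed
  have on_R: "\<phi>' x = \<phi> x" if "x \<in> R" for x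
    using \<phi>'_poly[OF poly_over_const[OF R that]] by (simp add: map_poly_pCons field_hom_on_0[OF hom])
  have "\<phi>' a = b"
    using \<phi>'_poly[OF poly_over_X[OF R]]
    by (simp add: map_poly_pCons field_hom_on_0[OF hom] field_hom_on_1[OF hom])
  moreover have "field_hom_on (adjoin R a) \<phi>'" unfolding field_hom_on_def
  proof (intro conjI ballI)
    show "is_subfield (adjoin R a)" by (rule adjoin_subfield(1)[OF R KR])
    show "\<phi>' 1 = 1" using on_R[OF subfield_1[OF R]] field_hom_on_1[OF hom] by simp
    fix x y assume "x \<in> adjoin R a" "y \<in> adjoin R a"
    then obtain h1 h2 where h: "x = poly h1 a" "y = poly h2 a" "poly_over R h1" "poly_over R h2"
      unfolding adjoin_def by blast
    show "\<phi>' (x + y) = \<phi>' x + \<phi>' y"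
      using \<phi>'_poly[OF poly_over_add[OF R h(3,4)]] map_poly_hom_add[OF hom h(3,4)] h \<phi>'_poly by simp
    show "\<phi>' (x * y) = \<phi>' x * \<phi>' y"
      using \<phi>'_poly[OF poly_over_mult[OF R h(3,4)]] map_poly_hom_mult[OF hom h(3,4)] h \<phi>'_poly by simp
  qed
  ultimately show ?thesis using that on_R by blast
qed

text \<open>A maximal extension is defined everywhere: otherwise
  adjoining a missing element a and sending it to a root of the image of its minimal
  polynomial gives a strictly larger extension.\<close>
lemma maximal_hom_extension_total:
  assumes ext: "hom_graph R \<phi> \<in> hom_extensions R0 \<phi>0" and KR0: "K \<subseteq> R0"
    and maximal: "\<And>X. X \<in> hom_extensions R0 \<phi>0 \<Longrightarrow> hom_graph R \<phi> \<subseteq> X \<Longrightarrow> X = hom_graph R \<phi>"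
  shows "R = UNIV"
proof (rule ccontr)
  obtain R' \<phi>' where R': "hom_graph R \<phi> = hom_graph R' \<phi>'" "field_hom_on R' \<phi>'" "R0 \<subseteq> R'"
    "\<forall>x\<in>R0. \<phi>' x = \<phi>0 x" using ext unfolding hom_extensions_def by blast
  hence "R' = R" by (metis Domain_hom_graph)
  with R'(1) have agree: "\<forall>x\<in>R. \<phi>' x = \<phi> x" by (metis hom_graph_subset_iff order_refl)
  have hom: "field_hom_on R \<phi>'" and KR: "K \<subseteq> R" using R' \<open>R' = R\<close> KR0 by auto
  have R: "is_subfield R" by (rule field_hom_on_subfield[OF hom])
  assume "R \<noteq> UNIV"
  then obtain a where "a \<notin> R" by blast
  obtain g where "g \<noteq> 0" "poly_over K g" "poly g a = 0" using algebraic by blast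
  then obtain p where p: "poly_over R p" "lead_coeff p = 1" "poly p a = 0"
    "\<And>q. poly_over R q \<Longrightarrow> poly q a = 0 \<Longrightarrow> \<exists>s. poly_over R s \<and> q = p * s"
    using minimal_poly_exists[OF R, of g] poly_over_mono[OF KR] by metis
  have "degree (map_poly \<phi>' p) > 0"
    using degree_map_poly_hom[OF hom p(1)] monic_root_imp_degree_pos[OF p(2,3)] by simp
  with closed obtain b where "poly (map_poly \<phi>' p) b = 0" by blast
  with hom_extends_to_root[OF hom KR p(1,3,4)] obtain \<psi> where
    \<psi>: "field_hom_on (adjoin R a) \<psi>" "\<forall>x\<in>R. \<psi> x = \<phi>' x" by blast
  have sub: "R \<subseteq> adjoin R a" "a \<in> adjoin R a" using adjoin_subfield[OF R KR] by blast+
  have "\<forall>x\<in>R0. \<psi> x = \<phi>0 x" using \<psi>(2) R'(3,4) \<open>R' = R\<close> by auto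
  hence "hom_graph (adjoin R a) \<psi> \<in> hom_extensions R0 \<phi>0"
    using \<psi>(1) sub R'(3) \<open>R' = R\<close> unfolding hom_extensions_def by blast
  moreover have "hom_graph R \<phi> \<subseteq> hom_graph (adjoin R a) \<psi>"
    using \<psi>(2) sub(1) agree by (simp add: hom_graph_subset_iff)
  ultimately have "hom_graph (adjoin R a) \<psi> = hom_graph R \<phi>" by (rule maximal)
  hence "(a, \<psi> a) \<in> hom_graph R \<phi>" using sub(2) by (metis hom_graph_mem)
  with \<open>a \<notin> R\<close> show False by simp
qed

text \<open>Surjectivity: an injective map permuting the finitely many roots of each polynomial over K.\<close>
lemma total_hom_fixing_K_is_aut:
  assumes hom: "field_hom_on UNIV \<phi>" and fix_K: "\<forall>x\<in>K. \<phi> x = x"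
  shows "field_aut \<phi>"
proof -
  have "y \<in> range \<phi>" for y
  proof -
    obtain g where g: "g \<noteq> 0" "poly_over K g" "poly g y = 0" using algebraic by blast
    have "map_poly \<phi> g = g" by (rule map_poly_fixing_coeffs[OF K_subfield fix_K g(2)])
    with field_hom_permutes_roots[OF hom g(1)] g(3) show ?thesis by blast
  qed
  hence "bij \<phi>" using field_hom_on_inj[OF hom] unfolding bij_def by blast
  thus ?thesis using hom by (simp add: field_aut_def field_hom_on_def)
qed

theorem hom_extends_to_aut:
  assumes hom: "field_hom_on R0 \<phi>0" and KR0: "K \<subseteq> R0" and fix_K: "\<forall>x\<in>K. \<phi>0 x = x"
  obtains \<sigma> where "field_aut \<sigma>" "\<forall>x\<in>R0. \<sigma> x = \<phi>0 x"
proof -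
  have "hom_graph R0 \<phi>0 \<in> hom_extensions R0 \<phi>0" using hom unfolding hom_extensions_def by blast
  hence "\<forall>C\<in>chains (hom_extensions R0 \<phi>0). \<exists>U\<in>hom_extensions R0 \<phi>0. \<forall>X\<in>C. X \<subseteq> U"
    using Union_chain_hom_extensions by (metis Union_upper empty_iff)
  from Zorn_Lemma2[OF this] obtain M where M: "M \<in> hom_extensions R0 \<phi>0"
    "\<And>X. X \<in> hom_extensions R0 \<phi>0 \<Longrightarrow> M \<subseteq> X \<Longrightarrow> X = M" by blast
  then obtain R \<phi> where R: "M = hom_graph R \<phi>" "field_hom_on R \<phi>" "R0 \<subseteq> R" "\<forall>x\<in>R0. \<phi> x = \<phi>0 x"
    unfolding hom_extensions_def by blast
  have "R = UNIV" using maximal_hom_extension_total[OF M(1)[unfolded R(1)] KR0] M(2) R(1) by blast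
  with R have "field_aut \<phi>" using fix_K KR0 by (intro total_hom_fixing_K_is_aut) auto
  with R(3,4) that show ?thesis by blast
qed

text \<open>The separability hypothesis on x is what makes a second root of its minimal
  polynomial available.\<close>
lemma fixed_simple_root_in_subfield:
  assumes F: "is_subfield F" "K \<subseteq> F"
    and g: "g \<noteq> 0" "poly_over F g" "poly g x = 0" "\<not> [:-x, 1:] ^ 2 dvd g"
    and fixed: "\<And>\<sigma>. field_aut \<sigma> \<Longrightarrow> \<forall>z\<in>F. \<sigma> z = z \<Longrightarrow> \<sigma> x = x"
  shows "x \<in> F"
proof (rule ccontr)
  assume "x \<notin> F"
  obtain p where p: "poly_over F p" "lead_coeff p = 1" "poly p x = 0"
    "\<And>q. poly_over F q \<Longrightarrow> poly q x = 0 \<Longrightarrow> \<exists>s. poly_over F s \<and> q = p * s"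
    by (rule minimal_poly_exists[OF F(1) g(1-3)]) blast
  from p(4)[OF g(2,3)] have "p dvd g" by auto
  have "degree p \<noteq> 1" using root_of_monic_linear_in_subfield[OF F(1) p(1,2) _ p(3)] \<open>x \<notin> F\<close> by blast
  from p(3) obtain p1 where p1: "p = [:-x, 1:] * p1" by (metis poly_eq_0_iff_dvd dvdE)
  have "p1 \<noteq> 0" using p1 p(2) by auto
  hence "degree p = Suc (degree p1)" unfolding p1 by (subst degree_mult_eq) auto
  with \<open>degree p \<noteq> 1\<close> have "degree p1 > 0" by simp
  with closed obtain y where y: "poly p1 y = 0" by blast
  have "y \<noteq> x"
  proof
    assume "y = x"
    hence "[:-x, 1:] dvd p1" using y by (simp add: poly_eq_0_iff_dvd)
    hence "[:-x, 1:] ^ 2 dvd p" unfolding p1 power2_eq_square by (rule mult_dvd_mono[OF dvd_refl])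
    with \<open>p dvd g\<close> g(4) show False using dvd_trans by blast
  qed
  have id_hom: "field_hom_on F id" using F(1) by (simp add: field_hom_on_def)
  from hom_extends_to_root[OF id_hom F(2) p(1,3,4)] p1 y obtain \<psi> where
    \<psi>: "field_hom_on (adjoin F x) \<psi>" "\<forall>z\<in>F. \<psi> z = z" "\<psi> x = y" by auto
  have "K \<subseteq> adjoin F x" using adjoin_subfield(2)[OF F] F(2) by blast
  with \<psi> F(2) obtain \<sigma> where "field_aut \<sigma>" "\<forall>z\<in>adjoin F x. \<sigma> z = \<psi> z"
    by (metis hom_extends_to_aut subsetD)
  with \<psi> adjoin_subfield(2,3)[OF F] \<open>y \<noteq> x\<close> fixed show False by (metis subsetD)
qed

end


section \<open>Roots of separable polynomials\<close>

lemma linear_poly_not_unit: "\<not> is_unit [:-z, 1::'a::field:]"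
  by (simp add: is_unit_iff_degree)

lemma double_root_imp_dvd_pderiv:
  fixes g :: "'a::field poly"
  assumes "[:-z, 1:] ^ 2 dvd g" shows "[:-z, 1:] dvd pderiv g"
proof -
  define L where "L = [:-z, 1::'a:]"
  from assms obtain h where h: "g = L * L * h" unfolding L_def power2_eq_square by (elim dvdE)
  have "pderiv L = 1" unfolding L_def by (simp add: pderiv_pCons)
  hence "pderiv g = L * L * pderiv h + h * (L * 1 + L * 1)"
    unfolding h pderiv_mult by simp
  also have "\<dots> = L * (L * pderiv h + h * 1 + h * 1)"
    by (simp only: distrib_left mult.assoc mult.left_commute[of h L] add.assoc)
  finally have "L dvd pderiv g" by (rule dvdI)
  thus ?thesis unfolding L_def .
qed

lemma coprime_pderiv_imp_no_double_root:
  fixes f :: "'a::field poly"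
  assumes "coprime f (pderiv f)" shows "\<not> [:-z, 1:] ^ 2 dvd f"
proof
  assume double: "[:-z, 1:] ^ 2 dvd f"
  have "[:-z, 1:] dvd [:-z, 1::'a:] ^ 2" by (simp only: power2_eq_square) (rule dvd_triv_left)
  hence "[:-z, 1:] dvd f" using double by (rule dvd_trans)
  with double_root_imp_dvd_pderiv[OF double] show False
    using coprime_common_divisor[OF assms] linear_poly_not_unit by blast
qed

lemma coprime_imp_no_common_root:
  fixes d f :: "'a::field poly"
  assumes "coprime d f" "poly f w = 0" shows "poly d w \<noteq> 0"
proof
  assume "poly d w = 0"
  hence "[:-w, 1:] dvd d" "[:-w, 1:] dvd f" using assms(2) by (simp_all add: poly_eq_0_iff_dvd)
  thus False using coprime_common_divisor[OF assms(1)] linear_poly_not_unit by blast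
qed

lemma square_root_is_simple_root:
  fixes z :: "'a::field"
  assumes "(2::'a) \<noteq> 0" "z \<noteq> 0" shows "\<not> [:-z, 1:] ^ 2 dvd [:- (z * z), 0, 1:]"
proof
  assume "[:-z, 1:] ^ 2 dvd [:- (z * z), 0, 1:]"
  hence "[:-z, 1:] dvd pderiv [:- (z * z), 0, 1:]" by (rule double_root_imp_dvd_pderiv)
  hence "poly (pderiv [:- (z * z), 0, 1:]) z = 0" by (simp add: poly_eq_0_iff_dvd)
  hence "z = 0 \<or> (2::'a) = 0" by (simp add: pderiv_pCons)
  with assms show False by blast
qed

lemma dvd_if_roots_of_separable:
  fixes g p :: "'a::field poly"
  assumes closed: "\<forall>p::'a poly. degree p > 0 \<longrightarrow> (\<exists>x. poly p x = 0)"
    and "g \<noteq> 0" "\<forall>z. \<not> [:-z, 1:] ^ 2 dvd g" "\<forall>w. poly g w = 0 \<longrightarrow> poly p w = 0"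
  shows "g dvd p"
  using assms(2-4)
proof (induction "degree g" arbitrary: g p rule: less_induct)
  case less
  show ?case
  proof (cases "degree g = 0")
    case True
    with less.prems have "is_unit g" by (simp add: is_unit_iff_degree)
    thus ?thesis by (rule unit_imp_dvd)
  next
    case False
    with closed obtain w where w: "poly g w = 0" by blast
    then obtain g1 where g1: "g = [:-w, 1:] * g1" by (metis poly_eq_0_iff_dvd dvdE)
    from less.prems(3) w have "poly p w = 0" by blast
    then obtain p1 where p1: "p = [:-w, 1:] * p1" by (metis poly_eq_0_iff_dvd dvdE)
    have "g1 \<noteq> 0" using g1 less.prems(1) by auto
    hence "degree g1 < degree g" unfolding g1 by (subst degree_mult_eq) auto
    moreover have "\<forall>z. \<not> [:-z, 1:] ^ 2 dvd g1" using less.prems(2) g1 by (metis dvd_mult)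
    moreover have "poly g1 w \<noteq> 0"
    proof
      assume "poly g1 w = 0"
      hence "[:-w, 1:] dvd g1" by (simp add: poly_eq_0_iff_dvd)
      hence "[:-w, 1:] ^ 2 dvd g" unfolding g1 power2_eq_square by (rule mult_dvd_mono[OF dvd_refl])
      thus False using less.prems(2) by blast
    qed
    have "\<forall>z. poly g1 z = 0 \<longrightarrow> poly p1 z = 0"
    proof (intro allI impI)
      fix z assume z: "poly g1 z = 0"
      with \<open>poly g1 w \<noteq> 0\<close> have "z \<noteq> w" by auto
      moreover have "poly p z = 0" using less.prems(3) z g1 by simp
      ultimately show "poly p1 z = 0" using p1 by simp
    qed
    ultimately have "g1 dvd p1" using less.hyps[of g1 p1] \<open>g1 \<noteq> 0\<close> by blast
    thus ?thesis unfolding g1 p1 by (rule mult_dvd_mono[OF dvd_refl])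
  qed
qed

lemma degree_le_card_roots_of_separable:
  fixes g :: "'a::field poly"
  assumes closed: "\<forall>p::'a poly. degree p > 0 \<longrightarrow> (\<exists>x. poly p x = 0)"
    and g: "g \<noteq> 0" "\<forall>z. \<not> [:-z, 1:] ^ 2 dvd g"
  shows "degree g \<le> card {w. poly g w = 0}"
proof -
  define Z where "Z = {w. poly g w = 0}"
  define Q where "Q = (\<Prod>w\<in>Z. [:-w, 1:])"
  have "finite Z" unfolding Z_def by (rule poly_roots_finite[OF g(1)])
  hence "Q \<noteq> 0" unfolding Q_def by (simp add: prod_zero_iff)
  moreover have "g dvd Q"
  proof (rule dvd_if_roots_of_separable[OF closed g], intro allI impI)
    fix w assume "poly g w = 0"
    hence "w \<in> Z" by (simp add: Z_def)
    thus "poly Q w = 0" unfolding Q_def poly_prod using \<open>finite Z\<close> by (auto intro: prod_zero)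
  qed
  ultimately have "degree g \<le> degree Q" by (rule dvd_imp_degree_le[rotated])
  also have "\<dots> \<le> card Z"
    unfolding Q_def using degree_prod_sum_le[OF \<open>finite Z\<close>, of "\<lambda>w. [:-w, 1::'a:]"] by simp
  finally show ?thesis unfolding Z_def .
qed

lemma interpolating_poly_exists:
  fixes S :: "'a::field set"
  assumes "finite S" shows "\<exists>q. \<forall>w\<in>S. poly q w = v w"
  using assms
proof (induction S rule: finite_induct)
  case (insert a S)
  from insert.IH obtain q where q: "\<forall>w\<in>S. poly q w = v w" by blast
  define P where "P = (\<Prod>b\<in>S. [:-b, 1:])"
  have "poly P w = 0" if "w \<in> S" for w
    unfolding P_def poly_prod using insert.hyps(1) that by (auto intro: prod_zero)
  moreover have "poly P a \<noteq> 0"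
    unfolding P_def poly_prod using insert.hyps by (auto simp: prod_zero_iff)
  ultimately have "\<forall>w\<in>insert a S. poly (q + smult ((v a - poly q a) / poly P a) P) w = v w"
    using q by auto
  thus ?case by blast
qed simp

section \<open>The lines of \<open>\<Lambda>\<close>\<close>

text \<open>Residues modulo f are identified with their value vectors on the roots \<open>\<Omega>\<close>:
  polynomials agree modulo f iff they agree on \<open>\<Omega>\<close>, and every vector of values is attained.\<close>
locale lambda_lines =
  fixes f d :: "'a::field poly" and r :: "'a \<Rightarrow> 'a"
  assumes closed: "\<forall>p::'a poly. degree p > 0 \<longrightarrow> (\<exists>x. poly p x = 0)"
    and f_sep: "coprime f (pderiv f)" and f_degree: "3 \<le> degree f"
    and d_unit: "coprime d f"
    and sqrt: "\<forall>\<omega>. poly f \<omega> = 0 \<longrightarrow> r \<omega> ^ 2 = poly d \<omega>"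
    and two: "(2::'a) \<noteq> 0"
begin

abbreviation \<Omega> :: "'a set" where "\<Omega> \<equiv> {\<omega>. poly f \<omega> = 0}"

lemma f_nonzero: "f \<noteq> 0"
  using f_degree by auto

lemma no_double_root: "\<not> [:-z, 1:] ^ 2 dvd f"
  by (rule coprime_pderiv_imp_no_double_root[OF f_sep])

lemma finite_roots: "finite \<Omega>"
  by (rule poly_roots_finite[OF f_nonzero])

lemma three_le_card_roots: "3 \<le> card \<Omega>"
  using f_degree degree_le_card_roots_of_separable[OF closed f_nonzero] no_double_root by fastforce

lemma r_nonzero: "\<omega> \<in> \<Omega> \<Longrightarrow> r \<omega> \<noteq> 0"
  using sqrt coprime_imp_no_common_root[OF d_unit] by fastforce

lemma mod_f_eq_iff: "p mod f = q mod f \<longleftrightarrow> (\<forall>\<omega>\<in>\<Omega>. poly p \<omega> = poly q \<omega>)"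
proof -
  have "f dvd p - q \<longleftrightarrow> (\<forall>\<omega>\<in>\<Omega>. poly (p - q) \<omega> = 0)"
  proof
    assume "f dvd p - q"
    then obtain k where "p - q = f * k" by (elim dvdE)
    thus "\<forall>\<omega>\<in>\<Omega>. poly (p - q) \<omega> = 0" by simp
  qed (use dvd_if_roots_of_separable[OF closed f_nonzero] no_double_root in blast)
  thus ?thesis by (simp add: mod_eq_dvd_iff)
qed

lemma reduced_interpolant: obtains q where "q mod f = q" "\<forall>\<omega>\<in>\<Omega>. poly q \<omega> = v \<omega>"
proof -
  from interpolating_poly_exists[OF finite_roots] obtain q where "\<forall>\<omega>\<in>\<Omega>. poly q \<omega> = v \<omega>" by blast
  with mod_f_eq_iff[of "q mod f" q] show ?thesis by (intro that[of "q mod f"]) simp_all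
qed

lemma mem_line_of_iff:
  "q \<in> line_of f e \<longleftrightarrow> q mod f = q \<and> (\<exists>s t. \<forall>\<omega>\<in>\<Omega>. poly e \<omega> * poly q \<omega> = t + s * \<omega>)"
  unfolding line_of_def mem_Collect_eq mod_f_eq_iff by (simp add: mult.commute)

lemma square_root_of_d_iff: "(e * e) mod f = d mod f \<longleftrightarrow> (\<forall>\<omega>\<in>\<Omega>. poly e \<omega> ^ 2 = poly d \<omega>)"
  unfolding mod_f_eq_iff by (simp add: power2_eq_square)

lemma square_root_of_d_nonzero: "(e * e) mod f = d mod f \<Longrightarrow> \<omega> \<in> \<Omega> \<Longrightarrow> poly e \<omega> \<noteq> 0"
  using square_root_of_d_iff coprime_imp_no_common_root[OF d_unit] by fastforce

lemma line_of_subset_if_proportional: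
  assumes "\<forall>\<omega>\<in>\<Omega>. poly e' \<omega> = c * poly e \<omega>" shows "line_of f e \<subseteq> line_of f e'"
proof
  fix q assume "q \<in> line_of f e"
  then obtain s t where st: "q mod f = q" "\<forall>\<omega>\<in>\<Omega>. poly e \<omega> * poly q \<omega> = t + s * \<omega>"
    unfolding mem_line_of_iff by blast
  have "\<forall>\<omega>\<in>\<Omega>. poly e' \<omega> * poly q \<omega> = c * t + (c * s) * \<omega>"
    using st(2) assms by (auto simp: algebra_simps)
  thus "q \<in> line_of f e'" unfolding mem_line_of_iff using st(1) by blast
qed

text \<open>If the two lines agree, the elements \<open>1/e\<close> and \<open>X/e\<close> of the first show that
  \<open>e'/e\<close> is a polynomial \<open>t + sX\<close> of degree at most one with \<open>(t + sX) X\<close> again of degree at most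
  one on \<open>\<Omega>\<close>; a quadratic vanishing on at least three points is zero, so \<open>s = 0\<close>.\<close>
lemma line_of_eq_iff:
  assumes nz: "\<forall>\<omega>\<in>\<Omega>. poly e \<omega> \<noteq> 0" "\<forall>\<omega>\<in>\<Omega>. poly e' \<omega> \<noteq> 0"
  shows "line_of f e = line_of f e' \<longleftrightarrow> (\<exists>c. \<forall>\<omega>\<in>\<Omega>. poly e' \<omega> = c * poly e \<omega>)"
proof
  assume "\<exists>c. \<forall>\<omega>\<in>\<Omega>. poly e' \<omega> = c * poly e \<omega>"
  then obtain c where c: "\<forall>\<omega>\<in>\<Omega>. poly e' \<omega> = c * poly e \<omega>" by blast
  have "\<forall>\<omega>\<in>\<Omega>. poly e \<omega> = inverse c * poly e' \<omega>" using c nz by auto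
  thus "line_of f e = line_of f e'" using line_of_subset_if_proportional c by blast
next
  assume eq: "line_of f e = line_of f e'"
  obtain q1 where q1: "q1 mod f = q1" "\<forall>\<omega>\<in>\<Omega>. poly q1 \<omega> = 1 / poly e \<omega>"
    by (rule reduced_interpolant)
  obtain q2 where q2: "q2 mod f = q2" "\<forall>\<omega>\<in>\<Omega>. poly q2 \<omega> = \<omega> / poly e \<omega>"
    by (rule reduced_interpolant)
  have "q1 \<in> line_of f e'" "q2 \<in> line_of f e'"
    unfolding eq[symmetric] mem_line_of_iff using q1 q2 nz
    by (intro conjI exI[of _ 0] exI[of _ 1]; auto; fail)+
  then obtain s1 t1 s2 t2 where
    st1: "\<forall>\<omega>\<in>\<Omega>. poly e' \<omega> * poly q1 \<omega> = t1 + s1 * \<omega>" and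
    st2: "\<forall>\<omega>\<in>\<Omega>. poly e' \<omega> * poly q2 \<omega> = t2 + s2 * \<omega>"
    unfolding mem_line_of_iff by blast
  have rel: "poly e' \<omega> = (t1 + s1 * \<omega>) * poly e \<omega>" if "\<omega> \<in> \<Omega>" for \<omega>
    using st1 q1 nz that by (auto simp: field_simps)
  define P where "P = [:- t2, t1 - s2, s1:]"
  have P_roots: "\<Omega> \<subseteq> {\<omega>. poly P \<omega> = 0}"
  proof
    fix \<omega> assume \<omega>: "\<omega> \<in> \<Omega>"
    have "poly e' \<omega> * poly q2 \<omega> = (t1 + s1 * \<omega>) * \<omega>"
      using rel[OF \<omega>] q2 nz \<omega> by simp
    hence "(t1 + s1 * \<omega>) * \<omega> = t2 + s2 * \<omega>" using st2 \<omega> by simp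
    thus "\<omega> \<in> {\<omega>. poly P \<omega> = 0}" unfolding P_def by (simp add: algebra_simps)
  qed
  have "P = 0"
  proof (rule ccontr)
    assume "P \<noteq> 0"
    hence "card \<Omega> \<le> card {\<omega>. poly P \<omega> = 0}"
      using P_roots poly_roots_finite by (metis card_mono)
    also have "\<dots> \<le> degree P" by (rule card_poly_roots_bound[OF \<open>P \<noteq> 0\<close>])
    also have "\<dots> \<le> 2" unfolding P_def by simp
    finally show False using three_le_card_roots by simp
  qed
  hence "s1 = 0" unfolding P_def by simp
  thus "\<exists>c. \<forall>\<omega>\<in>\<Omega>. poly e' \<omega> = c * poly e \<omega>" using rel by auto
qed


lemma aut_permutes_roots:
  assumes "field_aut \<sigma>" "map_poly \<sigma> f = f" shows "\<sigma> ` \<Omega> = \<Omega>"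
  by (rule field_hom_permutes_roots[OF field_aut_hom[OF assms(1)] f_nonzero assms(2)])

lemma map_poly_aut_line_of_subset:
  assumes \<sigma>: "field_aut \<sigma>" "map_poly \<sigma> f = f"
  shows "map_poly \<sigma> ` line_of f e \<subseteq> line_of f (map_poly \<sigma> e)"
proof
  fix p assume "p \<in> map_poly \<sigma> ` line_of f e"
  then obtain q where q: "p = map_poly \<sigma> q" "q \<in> line_of f e" by blast
  from q(2) obtain s t where st: "q mod f = q" "(e * q) mod f = [:t, s:] mod f"
    unfolding line_of_def by blast
  have "q = 0 \<or> degree q < degree f" using st(1) degree_mod_less[OF f_nonzero, of q] by metis
  hence "p mod f = p"
    using q(1) degree_map_poly_hom[OF field_aut_hom[OF \<sigma>(1)]] by (auto intro: mod_poly_less)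
  have "f dvd e * q - [:t, s:]" using st(2) by (simp add: mod_eq_dvd_iff)
  hence "map_poly \<sigma> f dvd map_poly \<sigma> (e * q - [:t, s:])"
    by (metis dvd_def field_aut_map_poly_mult[OF \<sigma>(1)])
  hence "f dvd map_poly \<sigma> e * p - [:\<sigma> t, \<sigma> s:]"
    using \<sigma> q(1) by (simp add: field_aut_map_poly_diff field_aut_map_poly_mult map_poly_pCons field_aut_0)
  hence "(map_poly \<sigma> e * p) mod f = [:\<sigma> t, \<sigma> s:] mod f" by (simp add: mod_eq_dvd_iff)
  with \<open>p mod f = p\<close> show "p \<in> line_of f (map_poly \<sigma> e)" unfolding line_of_def by blast
qed

lemma map_poly_aut_line_of:
  assumes \<sigma>: "field_aut \<sigma>" "map_poly \<sigma> f = f"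
  shows "map_poly \<sigma> ` line_of f e = line_of f (map_poly \<sigma> e)"
proof
  show "map_poly \<sigma> ` line_of f e \<subseteq> line_of f (map_poly \<sigma> e)" by (rule map_poly_aut_line_of_subset[OF \<sigma>])
  have "map_poly (inv \<sigma>) f = f" using map_poly_field_aut_inv(2)[OF \<sigma>(1), of f] \<sigma>(2) by simp
  hence "map_poly (inv \<sigma>) ` line_of f (map_poly \<sigma> e) \<subseteq> line_of f e"
    using map_poly_aut_line_of_subset[OF field_aut_inv[OF \<sigma>(1)]] map_poly_field_aut_inv(2)[OF \<sigma>(1)]
    by metis
  hence "map_poly \<sigma> ` map_poly (inv \<sigma>) ` line_of f (map_poly \<sigma> e) \<subseteq> map_poly \<sigma> ` line_of f e"
    by (rule image_mono)
  thus "line_of f (map_poly \<sigma> e) \<subseteq> map_poly \<sigma> ` line_of f e"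
    by (simp add: image_image map_poly_field_aut_inv(1)[OF \<sigma>(1)])
qed

lemma aut_fixes_line_iff:
  assumes \<sigma>: "field_aut \<sigma>" "map_poly \<sigma> f = f" and e: "(e * e) mod f = d mod f"
  shows "map_poly \<sigma> ` line_of f e = line_of f e \<longleftrightarrow>
           (\<exists>c. \<forall>\<omega>\<in>\<Omega>. \<sigma> (poly e \<omega>) = c * poly e (\<sigma> \<omega>))"
proof -
  have e_nz: "\<forall>\<omega>\<in>\<Omega>. poly e \<omega> \<noteq> 0" using square_root_of_d_nonzero[OF e] by blast
  have \<Omega>_eq: "\<Omega> = \<sigma> ` \<Omega>" by (rule aut_permutes_roots[OF \<sigma>, symmetric])
  have "\<forall>\<omega>\<in>\<Omega>. poly (map_poly \<sigma> e) \<omega> \<noteq> 0"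
    by (subst \<Omega>_eq) (use e_nz in \<open>auto simp: field_aut_poly[OF \<sigma>(1), symmetric] field_aut_eq_0_iff[OF \<sigma>(1)]\<close>)
  hence "line_of f e = line_of f (map_poly \<sigma> e) \<longleftrightarrow>
      (\<exists>c. \<forall>\<omega>\<in>\<Omega>. poly (map_poly \<sigma> e) \<omega> = c * poly e \<omega>)"
    by (rule line_of_eq_iff[OF e_nz])
  moreover have "(\<forall>\<omega>\<in>\<Omega>. poly (map_poly \<sigma> e) \<omega> = c * poly e \<omega>) \<longleftrightarrow>
      (\<forall>\<omega>\<in>\<Omega>. \<sigma> (poly e \<omega>) = c * poly e (\<sigma> \<omega>))" for c
    by (subst \<Omega>_eq) (simp add: field_aut_poly[OF \<sigma>(1)])
  ultimately show ?thesis using map_poly_aut_line_of[OF \<sigma>] by auto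
qed

text \<open>Any two square roots of d differ on \<open>\<Omega>\<close> only by signs, so when \<sigma> fixes all products
  \<open>r \<omega> r \<psi>\<close> it acts on the values of each root e by a single factor.\<close>
lemma aut_fixes_Lambda_lines:
  assumes \<sigma>: "field_aut \<sigma>" "map_poly \<sigma> f = f" "map_poly \<sigma> d = d"
    and fix_roots: "\<forall>\<omega>\<in>\<Omega>. \<sigma> \<omega> = \<omega>"
    and fix_products: "\<forall>\<omega>\<in>\<Omega>. \<forall>\<psi>\<in>\<Omega>. \<sigma> (r \<omega> * r \<psi>) = r \<omega> * r \<psi>"
    and Y: "Y \<in> Lambda_lines f d"
  shows "map_poly \<sigma> ` Y = Y"
proof -
  obtain e where Y_eq: "Y = line_of f e" and e: "(e * e) mod f = d mod f"
    using Y unfolding Lambda_lines_def by blast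
  have e_sq: "\<forall>\<omega>\<in>\<Omega>. poly e \<omega> ^ 2 = poly d \<omega>" using e square_root_of_d_iff by blast
  have e_nz: "\<forall>\<omega>\<in>\<Omega>. poly e \<omega> \<noteq> 0" using square_root_of_d_nonzero[OF e] by blast
  have "\<Omega> \<noteq> {}" using three_le_card_roots by (intro notI) simp
  then obtain \<psi> where \<psi>: "\<psi> \<in> \<Omega>" by blast
  define c where "c = \<sigma> (poly e \<psi>) / poly e \<psi>"
  have e\<psi>: "poly e \<psi> \<noteq> 0" "\<sigma> (poly e \<psi>) \<noteq> 0"
    using e_nz \<psi> field_aut_eq_0_iff[OF \<sigma>(1)] by auto
  have "\<sigma> (poly e \<psi>) ^ 2 = poly e \<psi> ^ 2"
    using field_aut_poly[OF \<sigma>(1), of d \<psi>] field_aut_power[OF \<sigma>(1), of "poly e \<psi>" 2]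
      e_sq \<sigma>(3) fix_roots \<psi> by simp
  hence c_sq: "poly e \<psi> * poly e \<psi> = \<sigma> (poly e \<psi>) * \<sigma> (poly e \<psi>)" by (simp add: power2_eq_square)
  have "\<sigma> (poly e \<omega>) = c * poly e (\<sigma> \<omega>)" if \<omega>: "\<omega> \<in> \<Omega>" for \<omega>
  proof -
    have "(poly e \<omega> * poly e \<psi>) ^ 2 = (r \<omega> * r \<psi>) ^ 2"
      using e_sq \<omega> \<psi> sqrt by (simp add: power_mult_distrib)
    hence "poly e \<omega> * poly e \<psi> = r \<omega> * r \<psi> \<or> poly e \<omega> * poly e \<psi> = - (r \<omega> * r \<psi>)"
      by (simp add: power2_eq_iff)
    hence "\<sigma> (poly e \<omega> * poly e \<psi>) = poly e \<omega> * poly e \<psi>"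
      using fix_products \<omega> \<psi> field_aut_uminus[OF \<sigma>(1)] by auto
    hence "\<sigma> (poly e \<omega>) * \<sigma> (poly e \<psi>) = poly e \<omega> * poly e \<psi>"
      by (simp add: field_aut_mult[OF \<sigma>(1)])
    hence "\<sigma> (poly e \<omega>) = poly e \<omega> * poly e \<psi> / \<sigma> (poly e \<psi>)"
      using e\<psi> by (simp add: eq_divide_eq)
    also have "\<dots> = c * poly e \<omega>"
      unfolding c_def using e\<psi> c_sq by (simp add: divide_simps)
    finally show ?thesis using fix_roots \<omega> by simp
  qed
  thus ?thesis unfolding Y_eq using aut_fixes_line_iff[OF \<sigma>(1,2) e] by blast
qed

lemma aut_fixing_Lambda_lines_proportional:
  assumes \<sigma>: "field_aut \<sigma>" "map_poly \<sigma> f = f"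
    and fix_lines: "\<forall>Y\<in>Lambda_lines f d. map_poly \<sigma> ` Y = Y"
    and e: "\<forall>\<omega>\<in>\<Omega>. poly e \<omega> ^ 2 = poly d \<omega>"
  obtains c where "\<forall>\<omega>\<in>\<Omega>. \<sigma> (poly e \<omega>) = c * poly e (\<sigma> \<omega>)"
proof -
  have e': "(e * e) mod f = d mod f" using e square_root_of_d_iff by blast
  hence "line_of f e \<in> Lambda_lines f d" unfolding Lambda_lines_def by blast
  hence "map_poly \<sigma> ` line_of f e = line_of f e" using fix_lines by blast
  thus ?thesis using aut_fixes_line_iff[OF \<sigma> e'] that by blast
qed

text \<open>If \<sigma> moved a root \<open>\<omega>\<close>, compare the lines of the square root with values r and of the
  one with the sign flipped at \<open>\<sigma> \<omega>\<close>: the two proportionality factors would have to be both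
  opposite (looking at \<open>\<omega>\<close>) and equal (looking at a third root), forcing both to vanish.\<close>
lemma aut_fixing_Lambda_lines_fixes_roots:
  assumes \<sigma>: "field_aut \<sigma>" "map_poly \<sigma> f = f"
    and fix_lines: "\<forall>Y\<in>Lambda_lines f d. map_poly \<sigma> ` Y = Y"
    and \<omega>: "\<omega> \<in> \<Omega>"
  shows "\<sigma> \<omega> = \<omega>"
proof (rule ccontr)
  assume moved: "\<sigma> \<omega> \<noteq> \<omega>"
  have \<sigma>\<Omega>: "\<sigma> ` \<Omega> = \<Omega>" by (rule aut_permutes_roots[OF \<sigma>])
  have "\<sigma> \<omega> \<in> \<Omega>" using \<omega> \<sigma>\<Omega> by blast
  have "\<exists>\<psi>\<in>\<Omega>. \<psi> \<noteq> \<omega> \<and> \<psi> \<noteq> \<sigma> \<omega>"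
  proof (rule ccontr)
    assume "\<not> ?thesis"
    hence "card \<Omega> \<le> card {\<omega>, \<sigma> \<omega>}" by (intro card_mono) auto
    also have "\<dots> \<le> 2" by (simp add: card_insert_if)
    finally show False using three_le_card_roots by simp
  qed
  then obtain \<psi> where \<psi>: "\<psi> \<in> \<Omega>" "\<psi> \<noteq> \<omega>" "\<psi> \<noteq> \<sigma> \<omega>" by blast
  have "\<sigma> \<psi> \<in> \<Omega>" "\<sigma> \<psi> \<noteq> \<sigma> \<omega>"
    using \<psi> \<sigma>\<Omega> bij_is_inj[OF field_aut_bij[OF \<sigma>(1)]] by (auto dest: injD)
  obtain e1 where e1: "\<forall>\<chi>\<in>\<Omega>. poly e1 \<chi> = r \<chi>" by (rule reduced_interpolant)
  obtain e2 where e2: "\<forall>\<chi>\<in>\<Omega>. poly e2 \<chi> = (if \<chi> = \<sigma> \<omega> then - r \<chi> else r \<chi>)"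
    by (rule reduced_interpolant)
  have "\<forall>\<chi>\<in>\<Omega>. poly e1 \<chi> ^ 2 = poly d \<chi>" using e1 sqrt by simp
  then obtain c1 where c1: "\<forall>\<chi>\<in>\<Omega>. \<sigma> (poly e1 \<chi>) = c1 * poly e1 (\<sigma> \<chi>)"
    by (rule aut_fixing_Lambda_lines_proportional[OF \<sigma> fix_lines])
  have "\<forall>\<chi>\<in>\<Omega>. poly e2 \<chi> ^ 2 = poly d \<chi>" using e2 sqrt by simp
  then obtain c2 where c2: "\<forall>\<chi>\<in>\<Omega>. \<sigma> (poly e2 \<chi>) = c2 * poly e2 (\<sigma> \<chi>)"
    by (rule aut_fixing_Lambda_lines_proportional[OF \<sigma> fix_lines])
  have "\<sigma> (r \<omega>) = c1 * r (\<sigma> \<omega>)" using c1 e1 \<omega> \<open>\<sigma> \<omega> \<in> \<Omega>\<close> by simp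
  moreover have "poly e2 \<omega> = r \<omega>" "poly e2 (\<sigma> \<omega>) = - r (\<sigma> \<omega>)"
    using e2 \<omega> \<open>\<sigma> \<omega> \<in> \<Omega>\<close> moved by auto
  hence "\<sigma> (r \<omega>) = c2 * (- r (\<sigma> \<omega>))" using c2 \<omega> by metis
  ultimately have "c1 * r (\<sigma> \<omega>) = - (c2 * r (\<sigma> \<omega>))" by simp
  hence "(c1 + c2) * r (\<sigma> \<omega>) = 0" by (simp only: eq_neg_iff_add_eq_0 distrib_right)
  hence c2_eq: "c2 = - c1" using r_nonzero[OF \<open>\<sigma> \<omega> \<in> \<Omega>\<close>] by (simp add: add_eq_0_iff)
  have "\<sigma> (r \<psi>) = c1 * r (\<sigma> \<psi>)" using c1 e1 \<psi>(1) \<open>\<sigma> \<psi> \<in> \<Omega>\<close> by simp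
  moreover have "poly e2 \<psi> = r \<psi>" "poly e2 (\<sigma> \<psi>) = r (\<sigma> \<psi>)"
    using e2 \<psi> \<open>\<sigma> \<psi> \<in> \<Omega>\<close> \<open>\<sigma> \<psi> \<noteq> \<sigma> \<omega>\<close> by auto
  hence "\<sigma> (r \<psi>) = c2 * r (\<sigma> \<psi>)" using c2 \<psi>(1) by metis
  ultimately have "c1 * r (\<sigma> \<psi>) = c2 * r (\<sigma> \<psi>)" by (rule trans[OF sym])
  hence "c1 * r (\<sigma> \<psi>) + c1 * r (\<sigma> \<psi>) = 0" unfolding c2_eq by simp
  hence "(2 * c1) * r (\<sigma> \<psi>) = 0" by (simp only: mult_2 distrib_right)
  hence "c1 = 0" using r_nonzero[OF \<open>\<sigma> \<psi> \<in> \<Omega>\<close>] two by simp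
  hence "\<sigma> (r \<omega>) = 0" using c1 e1 \<omega> by auto
  with r_nonzero[OF \<omega>] field_aut_eq_0_iff[OF \<sigma>(1)] show False by blast
qed

lemma aut_fixing_Lambda_lines_fixes_products:
  assumes \<sigma>: "field_aut \<sigma>" "map_poly \<sigma> f = f" "map_poly \<sigma> d = d"
    and fix_lines: "\<forall>Y\<in>Lambda_lines f d. map_poly \<sigma> ` Y = Y"
    and \<omega>\<psi>: "\<omega> \<in> \<Omega>" "\<psi> \<in> \<Omega>"
  shows "\<sigma> (r \<omega> * r \<psi>) = r \<omega> * r \<psi>"
proof -
  have fix_roots: "\<forall>\<chi>\<in>\<Omega>. \<sigma> \<chi> = \<chi>"
    using aut_fixing_Lambda_lines_fixes_roots[OF \<sigma>(1,2) fix_lines] by blast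
  obtain e where e: "\<forall>\<chi>\<in>\<Omega>. poly e \<chi> = r \<chi>" by (rule reduced_interpolant)
  have "\<forall>\<chi>\<in>\<Omega>. poly e \<chi> ^ 2 = poly d \<chi>" using e sqrt by simp
  then obtain c where "\<forall>\<chi>\<in>\<Omega>. \<sigma> (poly e \<chi>) = c * poly e (\<sigma> \<chi>)"
    by (rule aut_fixing_Lambda_lines_proportional[OF \<sigma>(1,2) fix_lines])
  hence \<sigma>r: "\<forall>\<chi>\<in>\<Omega>. \<sigma> (r \<chi>) = c * r \<chi>" using e fix_roots by auto
  have "\<sigma> (poly d \<omega>) = poly d \<omega>"
    using field_aut_poly[OF \<sigma>(1), of d \<omega>] \<sigma>(3) fix_roots \<omega>\<psi>(1) by simp
  hence "\<sigma> (r \<omega>) ^ 2 = r \<omega> ^ 2"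
    using field_aut_power[OF \<sigma>(1), of "r \<omega>" 2] sqrt \<omega>\<psi>(1) by simp
  hence "(c * c) * r \<omega> ^ 2 = 1 * r \<omega> ^ 2"
    using \<sigma>r \<omega>\<psi>(1) by (simp add: power_mult_distrib power2_eq_square[of c])
  hence "c * c = 1" using r_nonzero[OF \<omega>\<psi>(1)] by (simp only: mult_cancel_right) simp
  thus ?thesis using \<sigma>r \<omega>\<psi> field_aut_mult[OF \<sigma>(1)] by (simp add: algebra_simps)
qed


lemma fixes_each_Lambda_lines_iff:
  assumes K: "alg_closure K" and over_K: "poly_over K f" "poly_over K d"
    and F: "is_subfield F" "K \<subseteq> F"
  shows "fixes_each F (Lambda_lines f d) \<longleftrightarrow>
           \<Omega> \<union> {r \<omega> * r \<psi> | \<omega> \<psi>. poly f \<omega> = 0 \<and> poly f \<psi> = 0} \<subseteq> F"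
proof -
  have over_F: "poly_over F f" "poly_over F d" using over_K poly_over_mono[OF F(2)] by blast+
  have fixes_f_d: "map_poly \<sigma> f = f" "map_poly \<sigma> d = d" if "\<forall>x\<in>F. \<sigma> x = x" for \<sigma>
    using map_poly_fixing_coeffs[OF F(1) that] over_F by blast+
  show ?thesis
  proof
    assume fix_lines: "fixes_each F (Lambda_lines f d)"
    have fixed: "\<sigma> \<omega> = \<omega>" "\<sigma> (r \<omega> * r \<psi>) = r \<omega> * r \<psi>"
      if \<sigma>: "field_aut \<sigma>" "\<forall>x\<in>F. \<sigma> x = x" and \<omega>\<psi>: "\<omega> \<in> \<Omega>" "\<psi> \<in> \<Omega>" for \<sigma> \<omega> \<psi>
    proof -
      have lines: "\<forall>Y\<in>Lambda_lines f d. map_poly \<sigma> ` Y = Y"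
        using fix_lines \<sigma> unfolding fixes_each_def by blast
      show "\<sigma> \<omega> = \<omega>"
        by (rule aut_fixing_Lambda_lines_fixes_roots[OF \<sigma>(1) fixes_f_d(1)[OF \<sigma>(2)] lines \<omega>\<psi>(1)])
      show "\<sigma> (r \<omega> * r \<psi>) = r \<omega> * r \<psi>"
        by (rule aut_fixing_Lambda_lines_fixes_products[OF \<sigma>(1) fixes_f_d[OF \<sigma>(2)] lines \<omega>\<psi>])
    qed
    have roots_in_F: "\<Omega> \<subseteq> F"
    proof
      fix \<omega> assume \<omega>: "\<omega> \<in> \<Omega>"
      show "\<omega> \<in> F"
      proof (rule alg_closure.fixed_simple_root_in_subfield[OF K F f_nonzero over_F(1)])
        show "poly f \<omega> = 0" "\<not> [:-\<omega>, 1:] ^ 2 dvd f" using \<omega> no_double_root by simp_all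
        show "\<sigma> \<omega> = \<omega>" if "field_aut \<sigma>" "\<forall>z\<in>F. \<sigma> z = z" for \<sigma> by (rule fixed(1)[OF that \<omega> \<omega>])
      qed
    qed
    have "r \<omega> * r \<psi> \<in> F" if \<omega>\<psi>: "\<omega> \<in> \<Omega>" "\<psi> \<in> \<Omega>" for \<omega> \<psi>
    proof -
      define z where "z = r \<omega> * r \<psi>"
      have "z * z = poly d \<omega> * poly d \<psi>"
        unfolding z_def using sqrt \<omega>\<psi> by (simp add: power2_eq_square algebra_simps)
      moreover have "poly d \<omega> \<in> F" "poly d \<psi> \<in> F"
        using \<omega>\<psi> roots_in_F poly_in_subfield[OF F(1) over_F(2)] by auto
      ultimately have "- (z * z) \<in> F" using F(1) by (simp add: subfield_mult subfield_uminus)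
      hence "poly_over F [:- (z * z), 0, 1:]"
        using F(1) by (simp add: poly_over_pCons_iff poly_over_const subfield_0 subfield_1)
      moreover have "z \<noteq> 0" unfolding z_def using r_nonzero \<omega>\<psi> by simp
      ultimately have "z \<in> F"
      proof (intro alg_closure.fixed_simple_root_in_subfield[OF K F])
        show "\<not> [:-z, 1:] ^ 2 dvd [:- (z * z), 0, 1:]" using square_root_is_simple_root[OF two \<open>z \<noteq> 0\<close>] .
        show "\<sigma> z = z" if "field_aut \<sigma>" "\<forall>x\<in>F. \<sigma> x = x" for \<sigma>
          unfolding z_def by (rule fixed(2)[OF that \<omega>\<psi>])
      qed simp_all
      thus ?thesis unfolding z_def .
    qed
    with roots_in_F show "\<Omega> \<union> {r \<omega> * r \<psi> | \<omega> \<psi>. poly f \<omega> = 0 \<and> poly f \<psi> = 0} \<subseteq> F" by blast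
  next
    assume "\<Omega> \<union> {r \<omega> * r \<psi> | \<omega> \<psi>. poly f \<omega> = 0 \<and> poly f \<psi> = 0} \<subseteq> F"
    hence in_F: "\<Omega> \<subseteq> F" "\<forall>\<omega>\<in>\<Omega>. \<forall>\<psi>\<in>\<Omega>. r \<omega> * r \<psi> \<in> F" by blast+
    show "fixes_each F (Lambda_lines f d)" unfolding fixes_each_def
    proof (intro allI impI ballI)
      fix \<sigma> Y assume \<sigma>: "field_aut \<sigma> \<and> (\<forall>x\<in>F. \<sigma> x = x)" and Y: "Y \<in> Lambda_lines f d"
      have "\<forall>\<omega>\<in>\<Omega>. \<sigma> \<omega> = \<omega>" "\<forall>\<omega>\<in>\<Omega>. \<forall>\<psi>\<in>\<Omega>. \<sigma> (r \<omega> * r \<psi>) = r \<omega> * r \<psi>"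
        using \<sigma> in_F by blast+
      with \<sigma> fixes_f_d Y show "map_poly \<sigma> ` Y = Y" by (intro aut_fixes_Lambda_lines) blast+
    qed
  qed
qed

end

lemma is_field_of_def_seq_field_gen:
  assumes k: "is_subfield k"
    and fixes_iff: "\<And>F. is_subfield F \<Longrightarrow> k \<subseteq> F \<Longrightarrow> fixes_each F Ys \<longleftrightarrow> T \<subseteq> F"
  shows "is_field_of_def_seq k Ys (field_gen (k \<union> T))"
proof -
  have "k \<subseteq> field_gen (k \<union> T)" "T \<subseteq> field_gen (k \<union> T)" using field_gen_superset by blast+
  moreover have "field_gen (k \<union> T) \<subseteq> F" if "is_subfield F" "k \<subseteq> F" "fixes_each F Ys" for F
    using that fixes_iff by (intro field_gen_least) auto
  ultimately show ?thesis
    unfolding is_field_of_def_seq_def using fixes_iff subfield_field_gen by blast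
qed

theorem lemma2p36:
  fixes k :: "'a::field set" and f d :: "'a poly" and r :: "'a \<Rightarrow> 'a"
  assumes k_field: "is_subfield k"
    and char: "(2::'a) \<noteq> 0"
    and alg_closed: "\<forall>p::'a poly. degree p > 0 \<longrightarrow> (\<exists>x. poly p x = 0)"
    and algebraic: "\<forall>x::'a. \<exists>p. p \<noteq> 0 \<and> poly_over k p \<and> poly p x = 0"
    and f_over: "poly_over k f" and f_deg: "degree f = 6"
    and f_sep: "coprime f (pderiv f)"
    and d_over: "poly_over k d" and d_unit: "coprime d f"
    and sqrt: "\<forall>\<omega>. poly f \<omega> = 0 \<longrightarrow> r \<omega> ^ 2 = poly d \<omega>"
  shows "is_field_of_def_seq k (Lambda_lines f d)
           (field_gen (k \<union> {\<omega>. poly f \<omega> = 0} \<union>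
              {r \<omega> * r \<psi> | \<omega> \<psi>. poly f \<omega> = 0 \<and> poly f \<psi> = 0}))"
proof -
  interpret lambda_lines f d r
    by unfold_locales (use alg_closed f_sep f_deg d_unit sqrt char in auto)
  have "alg_closure k" by unfold_locales (use k_field alg_closed algebraic in auto)
  from is_field_of_def_seq_field_gen[OF k_field fixes_each_Lambda_lines_iff[OF this f_over d_over]]
  show ?thesis by (simp add: Un_assoc)
qed

end
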